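(* Consider the APT–DIFT game described in the context and the value-iteration sequence $V^{(0)},V^{(1)},V^{(2)},\dots$ of functions $\mathbf S\to\mathbb R$ defined there. Then for every $k\ge0$ and every $s\in\mathbf S$, $V^{(k+1)}(s)\ge V^{(k)}(s)$.
   Context: Let $\mathcal G=(V_{\mathcal G},E_{\mathcal G})$ be a finite directed graph with $V_{\mathcal G}=\{v_1,\dots,v_N\}$, let $\lambda\subset V_{\mathcal G}$ be a set of entry points and $\mathcal D=\{v_1,\dots,v_q\}\subset V_{\mathcal G}$ a destination set. Let $FN,FP:V_{\mathcal G}\to(0,1)$ and $\beta>0$. The APT–DIFT game has state space $\mathbf S=\{v_0,v_1,\dots,v_N,\phi,\tau_A,\tau_B\}$; the states in $\{\phi,\tau_A,\tau_B\}\cup\mathcal D$ are absorbing with empty action sets. At $v_0$: $\mathcal A_A(v_0)=\lambda$, $\mathcal A_D(v_0)=\{0\}$. At a non-absorbing $s=v_i\in V_{\mathcal G}$: $\mathcal A_A(s)=\{\phi\}\cup\{v_j:(v_i,v_j)\in E_{\mathcal G}\}$, $\mathcal A_D(s)=\{0\}\cup\{v_j:(v_i,v_j)\in E_{\mathcal G}\}$. Transition probabilities $P(s,a,d,s')$ for $a\in\mathcal A_A(s)$, $d\in\mathcal A_D(s)$: if $d=0$, $s'=a$ with probability $1$; if $d=a$, $s'=a$ with probability $FN(d)$ and $s'=\tau_A$ with probability $1-FN(d)$; if $d\ne0$ and $d\neq a$, $s'=\tau_B$ with probability $FP(d)$ and $s'=a$ with probability $1-FP(d)$. Value iteration (Algorithm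 1): $V^{(0)}(s)=0$ for all $s\in\mathbf S$; $V^{(1)}(s)=\beta$ for $s\in\{\tau_A,\phi\}$ and $V^{(1)}(s)=0$ for all other $s$; and for $k\ge1$, $V^{(k+1)}(s)=\beta$ if $s\in\{\phi,\tau_A\}$, $V^{(k+1)}(s)=0$ if $s\in\{\tau_B\}\cup\mathcal D$, and otherwise $$V^{(k+1)}(s)=\max_{p\in\Delta(\mathcal A_D(s))}\ \min_{a\in\mathcal A_A(s)}\ \sum_{s'\in\mathbf S}\sum_{d\in\mathcal A_D(s)}p(d)\,P(s,a,d,s')\,V^{(k)}(s'),$$ where $\Delta(\mathcal A_D(s))$ is the set of probability distributions on $\mathcal A_D(s)$. *)

theory Defs
  imports "HOL-Probability.Probability_Mass_Function"
begin

text \<open>States of the APT-DIFT game: the initial state v0, a graph vertex,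
  and the absorbing states phi, tau_A, tau_B.\<close>
datatype 'v st = V0 | Vtx 'v | Phi | TauA | TauB

definition states :: "'v set \<Rightarrow> 'v st set" where
  "states V = {V0, Phi, TauA, TauB} \<union> Vtx ` V"

fun actA :: "('v \<times> 'v) set \<Rightarrow> 'v set \<Rightarrow> 'v set \<Rightarrow> 'v st \<Rightarrow> 'v st set" where
  "actA E lam D V0 = Vtx ` lam"
| "actA E lam D (Vtx v) = (if v \<in> D then {} else insert Phi (Vtx ` {w. (v, w) \<in> E}))"
| "actA E lam D _ = {}"

text \<open>Defender action sets A_D(s); the defender action 0 is None, a vertex v_j is Some v_j.\<close>
fun actD :: "('v \<times> 'v) set \<Rightarrow> 'v set \<Rightarrow> 'v st \<Rightarrow> 'v option set" where
  "actD E D V0 = {None}"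
| "actD E D (Vtx v) = (if v \<in> D then {} else insert None (Some ` {w. (v, w) \<in> E}))"
| "actD E D _ = {}"

text \<open>Transition probability P(s,a,d,s') (independent of s).\<close>
definition trans :: "('v \<Rightarrow> real) \<Rightarrow> ('v \<Rightarrow> real) \<Rightarrow> 'v st \<Rightarrow> 'v option \<Rightarrow> 'v st \<Rightarrow> real" where
  "trans FN FP a d s' =
     (case d of
        None \<Rightarrow> (if s' = a then 1 else 0)
      | Some w \<Rightarrow>
          (if a = Vtx w
           then (if s' = a then FN w else 0) + (if s' = TauA then 1 - FN w else 0)
           else (if s' = TauB then FP w else 0) + (if s' = a then 1 - FP w else 0)))"

definition bellman ::
  "'v set \<Rightarrow> ('v \<times> 'v) set \<Rightarrow> 'v set \<Rightarrow> 'v set \<Rightarrow> ('v \<Rightarrow> real) \<Rightarrow> ('v \<Rightarrow> real)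
   \<Rightarrow> ('v st \<Rightarrow> real) \<Rightarrow> 'v st \<Rightarrow> real" where
  "bellman V E lam D FN FP W s =
     Sup ((\<lambda>p. Min ((\<lambda>a. \<Sum>s'\<in>states V. \<Sum>d\<in>actD E D s.
                          pmf p d * trans FN FP a d s' * W s') ` actA E lam D s))
          ` {p. set_pmf p \<subseteq> actD E D s})"

fun vi ::
  "'v set \<Rightarrow> ('v \<times> 'v) set \<Rightarrow> 'v set \<Rightarrow> 'v set \<Rightarrow> ('v \<Rightarrow> real) \<Rightarrow> ('v \<Rightarrow> real)
   \<Rightarrow> real \<Rightarrow> nat \<Rightarrow> 'v st \<Rightarrow> real" where
  "vi V E lam D FN FP \<beta> 0 s = 0"
| "vi V E lam D FN FP \<beta> (Suc 0) s = (if s \<in> {TauA, Phi} then \<beta> else 0)"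
| "vi V E lam D FN FP \<beta> (Suc (Suc k)) s =
     (if s \<in> {Phi, TauA} then \<beta>
      else if s \<in> insert TauB (Vtx ` D) then 0
      else bellman V E lam D FN FP (vi V E lam D FN FP \<beta> (Suc k)) s)"

end

theory Submission
  imports Defs
begin

text \<open>The Bellman operator is monotone in the value function: for fixed strategies the payoff is
  a nonnegative combination of the values at the successor states, and taking a minimum over
  attacker actions and a supremum over defender strategies preserves pointwise inequalities.
  At non-absorbing states \<open>V(1)\<close> vanishes, and so does the Bellman image of \<open>V(0) = 0\<close>; hence
  every step \<open>V(k) \<mapsto> V(k+1)\<close>, the first one included, applies the same monotone operator, and
  \<open>V(0) \<le> V(1)\<close> propagates to \<open>V(k) \<le> V(k+1)\<close> by induction.\<close>

lemma trans_bounds: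
  assumes "\<And>w. d = Some w \<Longrightarrow> 0 \<le> FN w \<and> FN w \<le> 1 \<and> 0 \<le> FP w \<and> FP w \<le> 1"
  shows "0 \<le> trans FN FP a d s'" and "trans FN FP a d s' \<le> 1"
  using assms unfolding trans_def by (auto split: option.splits)

lemma actD_Some_in_vertices:
  assumes "E \<subseteq> V \<times> V" and "Some w \<in> actD E D s"
  shows "w \<in> V"
  using assms by (cases s) (auto split: if_splits)

lemma finite_actA:
  assumes "finite V" and "E \<subseteq> V \<times> V" and "lam \<subseteq> V"
  shows "finite (actA E lam D s)"
proof (cases s)
  case (Vtx v)
  have "{w. (v, w) \<in> E} \<subseteq> V" using assms(2) by auto
  then show ?thesis using Vtx assms(1) finite_subset by auto
next
  case V0
  then show ?thesis using assms(1,3) finite_subset by auto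
qed auto

lemma actA_nonempty:
  assumes "lam \<noteq> {}" and "s \<notin> {Phi, TauA, TauB} \<union> Vtx ` D"
  shows "actA E lam D s \<noteq> {}"
  using assms by (cases s) auto

lemma None_in_actD:
  assumes "s \<notin> {Phi, TauA, TauB} \<union> Vtx ` D"
  shows "None \<in> actD E D s"
  using assms by (cases s) auto

lemma defender_strategies_nonempty:
  assumes "s \<notin> {Phi, TauA, TauB} \<union> Vtx ` D"
  shows "{p. set_pmf p \<subseteq> actD E D s} \<noteq> {}"
  using None_in_actD[OF assms] by (auto intro!: exI[of _ "return_pmf None"])

lemma SUP_Min_mono:
  fixes f g :: "'p \<Rightarrow> 'a \<Rightarrow> real"
  assumes "finite A" and "A \<noteq> {}" and "P \<noteq> {}"
    and le: "\<And>p a. p \<in> P \<Longrightarrow> a \<in> A \<Longrightarrow> f p a \<le> g p a"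
    and bound: "\<And>p a. p \<in> P \<Longrightarrow> a \<in> A \<Longrightarrow> g p a \<le> B"
  shows "(SUP p\<in>P. Min (f p ` A)) \<le> (SUP p\<in>P. Min (g p ` A))"
proof (rule cSUP_mono)
  obtain a0 where "a0 \<in> A" using \<open>A \<noteq> {}\<close> by blast
  then show "bdd_above ((\<lambda>p. Min (g p ` A)) ` P)"
    using bound \<open>finite A\<close> by (intro bdd_aboveI2[of _ _ B]) (meson Min_le finite_imageI image_eqI order_trans)
  show "\<exists>q\<in>P. Min (f p ` A) \<le> Min (g q ` A)" if "p \<in> P" for p
  proof
    have "Min (f p ` A) \<le> g p a" if "a \<in> A" for a
      using le[OF \<open>p \<in> P\<close> that] that \<open>finite A\<close> by (meson Min_le finite_imageI imageI order_trans)
    then show "Min (f p ` A) \<le> Min (g p ` A)"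
      using assms(1,2) by (auto intro!: Min.boundedI)
  qed (fact that)
qed (fact \<open>P \<noteq> {}\<close>)

lemma bellman_mono:
  assumes "finite V" and EV: "E \<subseteq> V \<times> V" and "lam \<subseteq> V" and "lam \<noteq> {}"
    and FN: "\<forall>v\<in>V. 0 \<le> FN v \<and> FN v \<le> 1" and FP: "\<forall>v\<in>V. 0 \<le> FP v \<and> FP v \<le> 1"
    and s: "s \<notin> {Phi, TauA, TauB} \<union> Vtx ` D"
    and W: "\<forall>x\<in>states V. W1 x \<le> W2 x"
  shows "bellman V E lam D FN FP W1 s \<le> bellman V E lam D FN FP W2 s"
proof -
  have trans: "0 \<le> trans FN FP a d s'" "trans FN FP a d s' \<le> 1" if "d \<in> actD E D s" for a d s'
    using trans_bounds FN FP actD_Some_in_vertices[OF EV] that by metis+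
  let ?payoff = "\<lambda>W p a. \<Sum>s'\<in>states V. \<Sum>d\<in>actD E D s. pmf p d * trans FN FP a d s' * W s'"
  have "(SUP p\<in>{p. set_pmf p \<subseteq> actD E D s}. Min (?payoff W1 p ` actA E lam D s))
      \<le> (SUP p\<in>{p. set_pmf p \<subseteq> actD E D s}. Min (?payoff W2 p ` actA E lam D s))"
  proof (rule SUP_Min_mono)
    show "finite (actA E lam D s)" "actA E lam D s \<noteq> {}"
      using finite_actA[OF assms(1-3)] actA_nonempty[OF assms(4) s] by auto
    show "{p. set_pmf p \<subseteq> actD E D s} \<noteq> {}"
      using defender_strategies_nonempty[OF s] .
    show "?payoff W1 p a \<le> ?payoff W2 p a" for p a
      using W trans by (intro sum_mono mult_left_mono) auto
    have "pmf p d * trans FN FP a d s' * W2 s' \<le> \<bar>W2 s'\<bar>" if "d \<in> actD E D s" for p a d s'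
    proof -
      have c: "0 \<le> pmf p d * trans FN FP a d s'" "pmf p d * trans FN FP a d s' \<le> 1"
        using trans[OF that] by (auto intro: mult_le_one pmf_le_1)
      have "pmf p d * trans FN FP a d s' * W2 s' \<le> pmf p d * trans FN FP a d s' * \<bar>W2 s'\<bar>"
        using c by (intro mult_left_mono) auto
      also have "\<dots> \<le> \<bar>W2 s'\<bar>"
        using c by (intro mult_left_le_one_le) auto
      finally show ?thesis .
    qed
    then show "?payoff W2 p a \<le> (\<Sum>s'\<in>states V. \<Sum>d\<in>actD E D s. \<bar>W2 s'\<bar>)" for p a
      by (intro sum_mono) auto
  qed
  then show ?thesis unfolding bellman_def .
qed

lemma bellman_zero:
  assumes "lam \<noteq> {}" and s: "s \<notin> {Phi, TauA, TauB} \<union> Vtx ` D"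
  shows "bellman V E lam D FN FP (\<lambda>_. 0) s = 0"
proof -
  have min_zero: "Min ((\<lambda>a. \<Sum>s'\<in>states V. \<Sum>d\<in>actD E D s. pmf p d * trans FN FP a d s' * 0)
      ` actA E lam D s) = (0::real)" for p
    using actA_nonempty[OF assms] by (simp add: image_constant_conv)
  show ?thesis
    unfolding bellman_def min_zero using defender_strategies_nonempty[OF s] by simp
qed

lemma vi_Suc:
  assumes "lam \<noteq> {}"
  shows "vi V E lam D FN FP \<beta> (Suc k) s =
    (if s \<in> {Phi, TauA} then \<beta>
     else if s \<in> insert TauB (Vtx ` D) then 0
     else bellman V E lam D FN FP (vi V E lam D FN FP \<beta> k) s)"
proof (cases k)
  case 0
  have "vi V E lam D FN FP \<beta> 0 = (\<lambda>_. 0)" by auto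
  then show ?thesis using 0 bellman_zero[OF assms, of s D V E FN FP] by auto
qed auto

theorem lemma1:
  fixes V :: "'v set" and E :: "('v \<times> 'v) set" and lam D :: "'v set"
    and FN FP :: "'v \<Rightarrow> real" and \<beta> :: real
  assumes "finite V"
    and "E \<subseteq> V \<times> V"
    and "lam \<subseteq> V" and "lam \<noteq> {}"
    and "D \<subseteq> V"
    and "\<forall>v\<in>V. 0 < FN v \<and> FN v < 1"
    and "\<forall>v\<in>V. 0 < FP v \<and> FP v < 1"
    and "\<beta> > 0"
  shows "\<forall>k. \<forall>s\<in>states V. vi V E lam D FN FP \<beta> (Suc k) s \<ge> vi V E lam D FN FP \<beta> k s"
proof
  fix k
  show "\<forall>s\<in>states V. vi V E lam D FN FP \<beta> (Suc k) s \<ge> vi V E lam D FN FP \<beta> k s"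
  proof (induction k)
    case 0
    show ?case using \<open>\<beta> > 0\<close> by simp
  next
    case (Suc k)
    have "bellman V E lam D FN FP (vi V E lam D FN FP \<beta> k) s
        \<le> bellman V E lam D FN FP (vi V E lam D FN FP \<beta> (Suc k)) s"
      if "s \<notin> {Phi, TauA, TauB} \<union> Vtx ` D" for s
      using assms Suc.IH that by (intro bellman_mono) (auto simp: less_imp_le)
    then show ?case
      using vi_Suc[OF \<open>lam \<noteq> {}\<close>, of V E D FN FP \<beta>] by simp
  qed
qed

end
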